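(* Let $\mu$ be a positive Borel measure on $\mathbb{C}$ of finite type, i.e. $\limsup_{r\to+\infty}\mu(D(0,r))/r<+\infty$, and let $r_0>0$. Then the quantities $$\bigl|\breve l^{\mathrm{rh}}_\mu(r,R)-l^{\mathrm{rh}}_\mu(r,R)\bigr|,\quad \bigl|\breve l^{\mathrm{lh}}_\mu(r,R)-l^{\mathrm{lh}}_\mu(r,R)\bigr|,\quad \bigl|\breve l_\mu(r,R)-l_\mu(r,R)\bigr|$$ are bounded over all $r_0\le r<R<+\infty$. Moreover, for any fixed $a\in(0,1]$ and $b\in[1,+\infty)$ the quantities $$\bigl|l^{\mathrm{rh}}_\mu(r,R)-l^{\mathrm{rh}}_\mu(ar,bR)\bigr|,\quad \bigl|l^{\mathrm{lh}}_\mu(r,R)-l^{\mathrm{lh}}_\mu(ar,bR)\bigr|,\quad \bigl|l_\mu(r,R)-l_\mu(ar,bR)\bigr|$$ are bounded over all $r_0\le r<R<+\infty$.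
   Context: $D(0,r)$ is the open disc of radius $r$ centered at $0$. For $0<r<R<+\infty$: $l^{\mathrm{rh}}_\mu(r,R):=\int_{r<|z|\le R,\ \mathrm{Re}\,z>0}\mathrm{Re}\frac1z\,d\mu(z)$, $l^{\mathrm{lh}}_\mu(r,R):=\int_{r<|z|\le R,\ \mathrm{Re}\,z<0}\mathrm{Re}(-\frac1z)\,d\mu(z)$, $l_\mu:=\max\{l^{\mathrm{lh}}_\mu,l^{\mathrm{rh}}_\mu\}$. For a $2\pi$-periodic Borel function $k\ge0$ on $\mathbb{R}$, $\mu(t;k):=\int_{|z|\le t}k(\arg z)\,d\mu(z)$; with $\cos^+\theta:=\max\{0,\cos\theta\}$, $\cos^-\theta:=\max\{0,-\cos\theta\}$, define $\breve l^{\mathrm{rh}}_\mu(r,R):=\int_r^R\frac{\mu(t;\cos^+)}{t^2}\,dt$, $\breve l^{\mathrm{lh}}_\mu(r,R):=\int_r^R\frac{\mu(t;\cos^-)}{t^2}\,dt$, $\breve l_\mu:=\max\{\breve l^{\mathrm{lh}}_\mu,\breve l^{\mathrm{rh}}_\mu\}$. *)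

theory Defs
  imports "HOL-Analysis.Analysis"
begin

definition finite_type :: "complex measure \<Rightarrow> bool" where
  "finite_type M \<longleftrightarrow>
     Limsup at_top (\<lambda>r::real. emeasure M (ball 0 r) / ennreal r) < \<infinity>"

definition l_rh :: "complex measure \<Rightarrow> real \<Rightarrow> real \<Rightarrow> real" where
  "l_rh M r R = (LINT z:{z. r < cmod z \<and> cmod z \<le> R \<and> Re z > 0}|M. Re (1 / z))"

definition l_lh :: "complex measure \<Rightarrow> real \<Rightarrow> real \<Rightarrow> real" where
  "l_lh M r R = (LINT z:{z. r < cmod z \<and> cmod z \<le> R \<and> Re z < 0}|M. Re (- (1 / z)))"

definition l_mu :: "complex measure \<Rightarrow> real \<Rightarrow> real \<Rightarrow> real" where
  "l_mu M r R = max (l_lh M r R) (l_rh M r R)"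

definition mu_k :: "complex measure \<Rightarrow> (real \<Rightarrow> real) \<Rightarrow> real \<Rightarrow> real" where
  "mu_k M k t = (LINT z:{z. cmod z \<le> t}|M. k (Arg z))"

definition cos_plus :: "real \<Rightarrow> real" where
  "cos_plus \<theta> = max 0 (cos \<theta>)"

definition cos_minus :: "real \<Rightarrow> real" where
  "cos_minus \<theta> = max 0 (- cos \<theta>)"

definition breve_l_rh :: "complex measure \<Rightarrow> real \<Rightarrow> real \<Rightarrow> real" where
  "breve_l_rh M r R = (LINT t:{r..R}|lborel. mu_k M cos_plus t / t^2)"

definition breve_l_lh :: "complex measure \<Rightarrow> real \<Rightarrow> real \<Rightarrow> real" where
  "breve_l_lh M r R = (LINT t:{r..R}|lborel. mu_k M cos_minus t / t^2)"

definition breve_l_mu :: "complex measure \<Rightarrow> real \<Rightarrow> real \<Rightarrow> real" where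
  "breve_l_mu M r R = max (breve_l_lh M r R) (breve_l_rh M r R)"

end

(*
  For k = cos_plus or cos_minus put f z = k (Arg z), so that 0 <= f <= 1.  Then
  Re (1/z) on the right half plane, resp. Re (-1/z) on the left one, equals f z / |z|,
  and both l-quantities are integrals of f z / |z| over annuli r < |z| <= R.

  Writing mu_f(t) for the integral of f over the closed disc of radius t, Tonelli's
  theorem turns the radial integral of mu_f(t) / t^2 into an integral over the disc of
  f z times the integral of 1/t^2 from max r |z| to R; this yields the integration by
  parts formula
     breve_l - l = mu_f(r) / r - mu_f(R) / R,
  whose two terms lie between 0 and mu(D(0,t)) / t.  Finite type gives
  mu(D(0,t)) <= K t for t >= r0, bounding the difference by K.  Passing from
  r < |z| <= R to a r < |z| <= b R adds the integrals over a r < |z| <= r and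
  R < |z| <= b R, which are at most mu(D(0,r)) / (a r) and mu(D(0,b R)) / R, hence at
  most K / a + K b.  The statements for l_mu and breve_l_mu follow because max is
  1-Lipschitz in each argument.
*)

theory Submission
  imports Defs
begin

definition annulus :: "real \<Rightarrow> real \<Rightarrow> complex set" where
  "annulus r R = {z. r < cmod z \<and> cmod z \<le> R}"

lemma annulus_subset_cball: "annulus r R \<subseteq> cball 0 R"
  by (auto simp: annulus_def)

lemma annulus_Un:
  assumes "r \<le> s" "s \<le> R"
  shows "annulus r R = annulus r s \<union> annulus s R" and "annulus r s \<inter> annulus s R = {}"
  using assms by (auto simp: annulus_def)

lemma inverse_square_has_integral:
  fixes a m R :: real
  assumes "0 < m" "m \<le> R"
  shows "((\<lambda>t. a / t^2) has_integral a * (1 / m - 1 / R)) {m..R}"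
proof -
  have "((\<lambda>t. a / t^2) has_integral (- a / R) - (- a / m)) {m..R}"
  proof (rule fundamental_theorem_of_calculus[OF assms(2)])
    fix x assume "x \<in> {m..R}"
    then have "x \<noteq> 0" using assms by auto
    then show "((\<lambda>t. - a / t) has_vector_derivative (a / x^2)) (at x within {m..R})"
      by (auto intro!: derivative_eq_intros simp: has_real_derivative_iff_has_vector_derivative[symmetric]
          power2_eq_square field_simps)
  qed
  then show ?thesis by (simp add: algebra_simps)
qed

lemma radial_weight_bound:
  fixes r R x :: real
  assumes "0 < r" "r \<le> R"
  shows "\<bar>1 / max r x - 1 / R\<bar> \<le> 1 / r"
proof -
  have "0 < 1 / max r x" "1 / max r x \<le> 1 / r"
    using assms by (auto intro!: divide_left_mono)
  moreover have "0 < 1 / R" "1 / R \<le> 1 / r"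
    using assms by (auto intro!: divide_left_mono)
  ultimately show ?thesis by linarith
qed

locale finite_on_discs =
  fixes M :: "complex measure"
  assumes sets_M [measurable_cong]: "sets M = sets borel"
    and emeasure_cball_finite: "emeasure M (cball 0 s) < \<infinity>"
begin

lemma space_M [simp]: "space M = UNIV"
  using sets_eq_imp_space_eq[OF sets_M] by simp

lemma annulus_in_sets [measurable]: "annulus r R \<in> sets M"
  unfolding annulus_def by measurable

lemma emeasure_bounded_finite:
  assumes "A \<subseteq> cball 0 \<rho>"
  shows "emeasure M A < \<infinity>"
proof -
  have "emeasure M A \<le> emeasure M (cball 0 \<rho>)"
    using assms by (intro emeasure_mono) auto
  then show ?thesis
    using emeasure_cball_finite by (rule le_less_trans)
qed

lemma measure_mono_cball:
  assumes "A \<subseteq> cball 0 \<rho>" "A \<in> sets M"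
  shows "measure M A \<le> measure M (cball 0 \<rho>)"
  using assms emeasure_cball_finite by (intro measure_mono_fmeasurable) (auto intro: fmeasurableI)

lemma set_integrable_bounded:
  fixes g :: "complex \<Rightarrow> real"
  assumes "A \<subseteq> cball 0 \<rho>" "A \<in> sets M" "g \<in> borel_measurable M" "\<And>z. z \<in> A \<Longrightarrow> \<bar>g z\<bar> \<le> c"
  shows "set_integrable M A g"
proof (rule set_integrable_bound)
  show "set_integrable M A (\<lambda>_. c)"
    using emeasure_bounded_finite[OF assms(1)] assms(2)
    by (simp add: set_integrable_def integrable_real_indicator)
  show "AE z in M. z \<in> A \<longrightarrow> norm (g z) \<le> norm c"
    using assms(4) by (auto intro!: AE_I2 intro: order.trans[OF _ abs_ge_self])
qed (use assms(2,3) in \<open>auto simp: set_borel_measurable_def intro!: borel_measurable_times\<close>)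

sublocale sigma_finite_measure M
proof
  show "\<exists>A. countable A \<and> A \<subseteq> sets M \<and> \<Union> A = space M \<and> (\<forall>a\<in>A. emeasure M a \<noteq> \<infinity>)"
  proof (intro exI[of _ "range (\<lambda>n::nat. cball 0 (real n))"] conjI)
    show "\<Union> (range (\<lambda>n::nat. cball 0 (real n))) = space M"
      by (auto simp: mem_cball_0 intro: real_arch_simple)
  qed (use emeasure_cball_finite in \<open>auto simp: less_top[symmetric]\<close>)
qed

context
  fixes f :: "complex \<Rightarrow> real"
  assumes f_measurable [measurable]: "f \<in> borel_measurable borel"
    and f_nonneg: "\<And>z. 0 \<le> f z" and f_le_1: "\<And>z. f z \<le> 1"
begin

lemma set_integrable_cball: "set_integrable M (cball 0 t) f"
  using f_nonneg f_le_1 by (intro set_integrable_bounded[where \<rho>=t and c=1]) auto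

lemma disc_integral_nonneg: "0 \<le> (LINT z:cball 0 t|M. f z)"
  unfolding set_lebesgue_integral_def using f_nonneg
  by (intro Bochner_Integration.integral_nonneg) (simp add: indicator_def)

lemma disc_integral_le_measure: "(LINT z:cball 0 t|M. f z) \<le> measure M (cball 0 t)"
proof -
  have "(LINT z:cball 0 t|M. f z) \<le> (LINT z:cball 0 t|M. 1)"
    using f_le_1 by (intro set_integral_mono set_integrable_cball set_integrable_bounded[where \<rho>=t and c=1]) auto
  also have "\<dots> = measure M (cball 0 t)"
    using emeasure_cball_finite[of t] by (subst set_integral_const) auto
  finally show ?thesis .
qed

lemma disc_integral_mono: "s \<le> t \<Longrightarrow> (LINT z:cball 0 s|M. f z) \<le> (LINT z:cball 0 t|M. f z)"
  using set_integrable_cball f_nonneg unfolding set_lebesgue_integral_def set_integrable_def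
  by (intro Bochner_Integration.integral_mono) (auto simp: indicator_def mem_cball_0)

lemma set_integrable_annulus: "0 < r \<Longrightarrow> set_integrable M (annulus r R) (\<lambda>z. f z / cmod z)"
  using f_nonneg f_le_1 annulus_subset_cball
  by (intro set_integrable_bounded[where \<rho>=R and c="1 / r"]) (auto simp: annulus_def intro!: frac_le)

lemma annulus_integral_nonneg: "0 \<le> (LINT z:annulus r R|M. f z / cmod z)"
  unfolding set_lebesgue_integral_def using f_nonneg
  by (intro Bochner_Integration.integral_nonneg) (simp add: indicator_def)

lemma annulus_integral_le:
  assumes "0 < r"
  shows "(LINT z:annulus r R|M. f z / cmod z) \<le> measure M (cball 0 R) / r"
proof -
  have "(LINT z:annulus r R|M. f z / cmod z) \<le> (LINT z:annulus r R|M. 1 / r)"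
    using assms f_nonneg f_le_1 annulus_subset_cball
    by (intro set_integral_mono set_integrable_annulus set_integrable_bounded[where \<rho>=R and c="1 / r"])
       (auto simp: annulus_def intro!: frac_le)
  also have "\<dots> = measure M (annulus r R) / r"
    using emeasure_bounded_finite[OF annulus_subset_cball, of r R] by (subst set_integral_const) auto
  also have "\<dots> \<le> measure M (cball 0 R) / r"
    using assms by (intro divide_right_mono measure_mono_cball annulus_subset_cball) auto
  finally show ?thesis .
qed

lemma annulus_integral_split:
  assumes "0 < r" "r \<le> s" "s \<le> R"
  shows "(LINT z:annulus r R|M. f z / cmod z)
       = (LINT z:annulus r s|M. f z / cmod z) + (LINT z:annulus s R|M. f z / cmod z)"
  unfolding annulus_Un(1)[OF assms(2,3)] using assms
  by (intro set_integral_Un annulus_Un(2) set_integrable_annulus) auto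

lemma annulus_integral_enlarge:
  assumes "0 < r'" "r' \<le> r" "r \<le> R" "R \<le> R'"
  shows "0 \<le> (LINT z:annulus r' R'|M. f z / cmod z) - (LINT z:annulus r R|M. f z / cmod z)"
    and "(LINT z:annulus r' R'|M. f z / cmod z) - (LINT z:annulus r R|M. f z / cmod z)
           \<le> measure M (cball 0 r) / r' + measure M (cball 0 R') / R"
proof -
  have "(LINT z:annulus r' R'|M. f z / cmod z) - (LINT z:annulus r R|M. f z / cmod z)
      = (LINT z:annulus r' r|M. f z / cmod z) + (LINT z:annulus R R'|M. f z / cmod z)"
    using assms annulus_integral_split[of r' r R'] annulus_integral_split[of r R R'] by simp
  moreover have "(LINT z:annulus r' r|M. f z / cmod z) \<le> measure M (cball 0 r) / r'"
    using assms by (intro annulus_integral_le)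
  moreover have "(LINT z:annulus R R'|M. f z / cmod z) \<le> measure M (cball 0 R') / R"
    using assms by (intro annulus_integral_le) simp
  ultimately show "0 \<le> (LINT z:annulus r' R'|M. f z / cmod z) - (LINT z:annulus r R|M. f z / cmod z)"
    and "(LINT z:annulus r' R'|M. f z / cmod z) - (LINT z:annulus r R|M. f z / cmod z)
           \<le> measure M (cball 0 r) / r' + measure M (cball 0 R') / R"
    using annulus_integral_nonneg[of r' r] annulus_integral_nonneg[of R R'] by linarith+
qed

lemma set_integrable_cball_mult:
  assumes "w \<in> borel_measurable borel" "\<And>z. \<bar>w z\<bar> \<le> B"
  shows "set_integrable M (cball 0 R) (\<lambda>z. f z * w z)"
proof (rule set_integrable_bounded[where \<rho>=R and c=B])
  show "\<bar>f z * w z\<bar> \<le> B" for z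
    using assms(2)[of z] f_nonneg[of z] f_le_1[of z]
    by (auto simp: abs_mult intro: order.trans[OF mult_left_le_one_le])
qed (use assms(1) in simp_all)

lemma radial_integral_eq_disc_integral:
  assumes "0 < r" "r \<le> R"
  shows "(LINT t:{r..R}|lborel. (LINT z:cball 0 t|M. f z) / t^2)
       = (LINT z:cball 0 R|M. f z * (1 / max r (cmod z) - 1 / R))"
proof -
  define h where "h t = (LINT z:cball 0 t|M. f z)" for t
  define c where "c z = 1 / max r (cmod z) - 1 / R" for z :: complex
  define F where "F z t = ennreal (if r \<le> t \<and> t \<le> R \<and> cmod z \<le> t then f z / t^2 else 0)" for z t
  have h_measurable [measurable]: "h \<in> borel_measurable borel"
    unfolding h_def using disc_integral_mono by (intro borel_measurable_mono monoI)
  have c_nonneg: "0 \<le> c z" if "z \<in> cball 0 R" for z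
    using that assms by (auto simp: c_def field_simps)
  have h_indicator: "h t = (\<integral>z. indicator (cball 0 t) z * f z \<partial>M)" for t
    unfolding h_def set_lebesgue_integral_def by simp
  have inner: "ennreal (indicator {r..R} t * h t / t^2) = (\<integral>\<^sup>+ z. F z t \<partial>M)" for t
  proof -
    have "indicator {r..R} t * h t / t^2
        = (\<integral>z. indicator {r..R} t / t^2 * (indicator (cball 0 t) z * f z) \<partial>M)"
      unfolding h_indicator by simp
    also have "ennreal \<dots>
        = (\<integral>\<^sup>+ z. ennreal (indicator {r..R} t / t^2 * (indicator (cball 0 t) z * f z)) \<partial>M)"
      using set_integrable_cball[of t] f_nonneg
      by (intro nn_integral_eq_integral[symmetric]) (auto simp: set_integrable_def intro!: AE_I2)
    also have "\<dots> = (\<integral>\<^sup>+ z. F z t \<partial>M)"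
      by (rule nn_integral_cong) (auto simp: F_def indicator_def mem_cball_0)
    finally show ?thesis .
  qed
  have outer: "(\<integral>\<^sup>+ t. F z t \<partial>lborel) = ennreal (indicator (cball 0 R) z * (f z * c z))" for z
  proof (cases "z \<in> cball 0 R")
    case True
    define m where "m = max r (cmod z)"
    have m: "0 < m" "m \<le> R" using True assms by (auto simp: m_def)
    have "(\<integral>\<^sup>+ t. F z t \<partial>lborel) = (\<integral>\<^sup>+ t. ennreal (indicator {m..R} t * (f z / t^2)) \<partial>lborel)"
      by (rule nn_integral_cong) (auto simp: F_def m_def indicator_def)
    also have "\<dots> = ennreal (f z * (1 / m - 1 / R))"
      using f_nonneg by (intro nn_integral_has_integral_lebesgue inverse_square_has_integral m) auto
    finally show ?thesis using True by (simp add: c_def m_def)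
  next
    case False
    then have "F z = (\<lambda>t. 0)" by (auto simp: F_def fun_eq_iff mem_cball_0)
    then show ?thesis using False by simp
  qed
  have integrable_fc: "set_integrable M (cball 0 R) (\<lambda>z. f z * c z)"
    unfolding c_def by (rule set_integrable_cball_mult[OF _ radial_weight_bound[OF assms]]) simp
  interpret pair_sigma_finite M lborel
    by (intro pair_sigma_finite.intro sigma_finite_measure_axioms sigma_finite_lborel)
  have F_measurable: "case_prod F \<in> borel_measurable (M \<Otimes>\<^sub>M lborel)"
    unfolding F_def by measurable
  have "(LINT t:{r..R}|lborel. h t / t^2) = enn2real (\<integral>\<^sup>+ t. ennreal (indicator {r..R} t * h t / t^2) \<partial>lborel)"
    unfolding set_lebesgue_integral_def
    using disc_integral_nonneg
    by (subst integral_eq_nn_integral) (auto intro!: AE_I2 simp: h_def[symmetric])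
  also have "\<dots> = enn2real (\<integral>\<^sup>+ z. \<integral>\<^sup>+ t. F z t \<partial>lborel \<partial>M)"
    unfolding inner using Fubini'[OF F_measurable] by simp
  also have "\<dots> = (LINT z:cball 0 R|M. f z * c z)"
    unfolding outer set_lebesgue_integral_def using integrable_fc f_nonneg c_nonneg
    by (subst nn_integral_eq_integral)
       (auto simp: set_integrable_def intro!: AE_I2 split: split_indicator)
  finally show ?thesis unfolding h_def c_def .
qed

lemma annulus_integral_by_parts:
  assumes "0 < r" "r \<le> R"
  shows "(LINT t:{r..R}|lborel. (LINT z:cball 0 t|M. f z) / t^2) - (LINT z:annulus r R|M. f z / cmod z)
       = (LINT z:cball 0 r|M. f z) / r - (LINT z:cball 0 R|M. f z) / R"
proof -
  have "set_integrable M (cball 0 R) (\<lambda>z. f z * (1 / max r (cmod z) - 1 / R))"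
    by (rule set_integrable_cball_mult[OF _ radial_weight_bound[OF assms]]) simp
  then have "(LINT t:{r..R}|lborel. (LINT z:cball 0 t|M. f z) / t^2) - (LINT z:annulus r R|M. f z / cmod z)
      = (\<integral>z. indicator (cball 0 R) z *\<^sub>R (f z * (1 / max r (cmod z) - 1 / R))
             - indicator (annulus r R) z *\<^sub>R (f z / cmod z) \<partial>M)"
    using set_integrable_annulus[OF assms(1)]
    unfolding radial_integral_eq_disc_integral[OF assms]
    unfolding set_lebesgue_integral_def set_integrable_def
    by (rule Bochner_Integration.integral_diff[symmetric])
  also have "\<dots> = (\<integral>z. indicator (cball 0 r) z * f z / r - indicator (cball 0 R) z * f z / R \<partial>M)"
    using assms
    by (intro Bochner_Integration.integral_cong) (auto simp: annulus_def indicator_def max_def field_simps)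
  also have "\<dots> = (LINT z:cball 0 r|M. f z) / r - (LINT z:cball 0 R|M. f z) / R"
    using set_integrable_cball unfolding set_lebesgue_integral_def set_integrable_def
    by (simp add: Bochner_Integration.integral_diff)
  finally show ?thesis .
qed

lemma annulus_integral_by_parts_bound:
  assumes "0 < r" "r \<le> R"
  shows "\<bar>(LINT t:{r..R}|lborel. (LINT z:cball 0 t|M. f z) / t^2) - (LINT z:annulus r R|M. f z / cmod z)\<bar>
       \<le> max (measure M (cball 0 r) / r) (measure M (cball 0 R) / R)"
proof -
  have "0 \<le> (LINT z:cball 0 s|M. f z) / s \<and> (LINT z:cball 0 s|M. f z) / s \<le> measure M (cball 0 s) / s"
    if "0 < s" for s
    using that disc_integral_nonneg disc_integral_le_measure by (simp add: divide_right_mono)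
  then show ?thesis
    unfolding annulus_integral_by_parts[OF assms] using assms by (smt (verit))
qed

context
  fixes K r0 :: real
  assumes linear_growth: "\<And>s. r0 \<le> s \<Longrightarrow> measure M (cball 0 s) \<le> K * s"
    and r0_pos: "0 < r0"
begin

lemma annulus_integral_by_parts_linear_growth:
  assumes "r0 \<le> r" "r \<le> R"
  shows "\<bar>(LINT t:{r..R}|lborel. (LINT z:cball 0 t|M. f z) / t^2) - (LINT z:annulus r R|M. f z / cmod z)\<bar> \<le> K"
proof -
  have "measure M (cball 0 s) / s \<le> K" if "r0 \<le> s" for s
    using linear_growth[OF that] that r0_pos by (simp add: divide_le_eq)
  then have "max (measure M (cball 0 r) / r) (measure M (cball 0 R) / R) \<le> K"
    using assms by simp
  moreover have "0 < r"
    using assms r0_pos by simp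
  ultimately show ?thesis
    using annulus_integral_by_parts_bound[OF _ assms(2)] by fastforce
qed

lemma annulus_integral_enlarge_linear_growth:
  assumes "r0 \<le> r" "r \<le> R" "0 < a" "a \<le> 1" "1 \<le> b"
  shows "\<bar>(LINT z:annulus r R|M. f z / cmod z) - (LINT z:annulus (a * r) (b * R)|M. f z / cmod z)\<bar>
       \<le> K / a + K * b"
proof -
  have r: "0 < r" "0 < R" "0 < a * r" "a * r \<le> r" "R \<le> b * R"
    using assms r0_pos by (auto simp: mult_left_le_one_le)
  have "measure M (cball 0 r) / (a * r) + measure M (cball 0 (b * R)) / R \<le> K * r / (a * r) + K * (b * R) / R"
    using linear_growth[of r] linear_growth[of "b * R"] assms r
    by (intro add_mono divide_right_mono) auto
  also have "\<dots> = K / a + K * b"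
    using r by (simp add: field_simps)
  finally show ?thesis
    using annulus_integral_enlarge[of "a * r" r R "b * R"] assms r by (simp add: abs_minus_commute)
qed

end

end
end

lemma norm_le_eq_cball: "{z::complex. cmod z \<le> t} = cball 0 t"
  by (auto simp: mem_cball_0)

lemma cos_Arg_eq_if: "cos (Arg z) = (if z = 0 then 1 else Re z / cmod z)"
  by (simp add: cos_Arg Arg_zero)

lemma borel_measurable_cos_plus_Arg [measurable]: "(\<lambda>z. cos_plus (Arg z)) \<in> borel_measurable borel"
  unfolding cos_plus_def cos_Arg_eq_if by measurable

lemma borel_measurable_cos_minus_Arg [measurable]: "(\<lambda>z. cos_minus (Arg z)) \<in> borel_measurable borel"
  unfolding cos_minus_def cos_Arg_eq_if by measurable

lemma cos_plus_nonneg: "0 \<le> cos_plus \<theta>" and cos_plus_le_1: "cos_plus \<theta> \<le> 1"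
  by (auto simp: cos_plus_def)

lemma cos_minus_nonneg: "0 \<le> cos_minus \<theta>" and cos_minus_le_1: "cos_minus \<theta> \<le> 1"
  by (auto simp: cos_minus_def)

lemma Re_inverse_eq_cos_Arg:
  assumes "z \<noteq> 0"
  shows "Re (1 / z) = cos (Arg z) / cmod z"
proof -
  have "Re (1 / z) = Re z / (cmod z)^2"
    by (simp add: Re_divide cmod_power2)
  then show ?thesis
    by (simp add: cos_Arg[OF assms] power2_eq_square)
qed

lemma l_rh_eq_annulus_integral:
  assumes "0 \<le> r"
  shows "l_rh M r R = (LINT z:annulus r R|M. cos_plus (Arg z) / cmod z)"
  unfolding l_rh_def set_lebesgue_integral_def
proof (rule Bochner_Integration.integral_cong[OF refl])
  fix z
  show "indicator {z. r < cmod z \<and> cmod z \<le> R \<and> Re z > 0} z *\<^sub>R Re (1 / z)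
      = indicator (annulus r R) z *\<^sub>R (cos_plus (Arg z) / cmod z)"
  proof (cases "z \<in> annulus r R")
    case True
    then have "z \<noteq> 0"
      using assms by (auto simp: annulus_def)
    then have "Re (1 / z) = cos (Arg z) / cmod z" "0 < cos (Arg z) \<longleftrightarrow> 0 < Re z"
      by (auto simp: Re_inverse_eq_cos_Arg cos_Arg zero_less_divide_iff)
    then show ?thesis
      using True by (auto simp: annulus_def indicator_def cos_plus_def max_def)
  qed (auto simp: annulus_def indicator_def)
qed

lemma l_lh_eq_annulus_integral:
  assumes "0 \<le> r"
  shows "l_lh M r R = (LINT z:annulus r R|M. cos_minus (Arg z) / cmod z)"
  unfolding l_lh_def set_lebesgue_integral_def
proof (rule Bochner_Integration.integral_cong[OF refl])
  fix z
  show "indicator {z. r < cmod z \<and> cmod z \<le> R \<and> Re z < 0} z *\<^sub>R Re (- (1 / z))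
      = indicator (annulus r R) z *\<^sub>R (cos_minus (Arg z) / cmod z)"
  proof (cases "z \<in> annulus r R")
    case True
    then have "z \<noteq> 0"
      using assms by (auto simp: annulus_def)
    then have "Re (1 / z) = cos (Arg z) / cmod z" "cos (Arg z) < 0 \<longleftrightarrow> Re z < 0"
      by (auto simp: Re_inverse_eq_cos_Arg cos_Arg divide_less_0_iff)
    then show ?thesis
      using True by (auto simp: annulus_def indicator_def cos_minus_def max_def)
  qed (auto simp: annulus_def indicator_def)
qed

lemma breve_l_rh_eq: "breve_l_rh M r R = (LINT t:{r..R}|lborel. (LINT z:cball 0 t|M. cos_plus (Arg z)) / t^2)"
  unfolding breve_l_rh_def mu_k_def norm_le_eq_cball ..

lemma breve_l_lh_eq: "breve_l_lh M r R = (LINT t:{r..R}|lborel. (LINT z:cball 0 t|M. cos_minus (Arg z)) / t^2)"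
  unfolding breve_l_lh_def mu_k_def norm_le_eq_cball ..

lemma finite_type_linear_growth:
  fixes M :: "complex measure"
  assumes "sets M = sets borel" "finite_type M" "0 < r0"
  obtains K where "0 \<le> K" "\<And>s. r0 \<le> s \<Longrightarrow> emeasure M (cball 0 s) \<le> ennreal (K * s)"
proof -
  obtain C :: real where "0 \<le> C" and C: "Limsup at_top (\<lambda>r. emeasure M (ball 0 r) / ennreal r) < ennreal C"
  proof -
    have "Limsup at_top (\<lambda>r. emeasure M (ball 0 r) / ennreal r) < \<infinity>"
      using assms(2) unfolding finite_type_def .
    then obtain x where "Limsup at_top (\<lambda>r. emeasure M (ball 0 r) / ennreal r) = ennreal x" "0 \<le> x"
      by (cases "Limsup at_top (\<lambda>r. emeasure M (ball 0 r) / ennreal r)") auto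
    then show thesis
      using that[of "x + 1"] by simp
  qed
  then obtain N where N: "\<And>r. N \<le> r \<Longrightarrow> emeasure M (ball 0 r) / ennreal r < ennreal C"
    using Limsup_lessD[OF C] unfolding eventually_at_top_linorder by blast
  define N' where "N' = max N 1"
  show thesis
  proof (rule that[of "C * (1 + N' / r0)"])
    show "0 \<le> C * (1 + N' / r0)"
      using \<open>0 \<le> C\<close> assms(3) by (simp add: N'_def)
    fix s assume "r0 \<le> s"
    then have s: "0 < s" "0 < s + N'" "N \<le> s + N'"
      using assms(3) by (auto simp: N'_def)
    have "emeasure M (cball 0 s) \<le> emeasure M (ball 0 (s + N'))"
      using assms(1) by (intro emeasure_mono) (auto simp: N'_def subset_eq)
    also have "\<dots> \<le> ennreal C * ennreal (s + N')"
      using N[OF s(3)] s(2) by (subst (asm) divide_less_ennreal) auto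
    also have "\<dots> \<le> ennreal (C * (1 + N' / r0) * s)"
    proof -
      have "N' * 1 \<le> N' * (s / r0)"
        using \<open>r0 \<le> s\<close> assms(3) by (intro mult_left_mono) (auto simp: N'_def)
      then have "N' \<le> N' / r0 * s"
        by simp
      then have "C * (s + N') \<le> C * (s + N' / r0 * s)"
        using \<open>0 \<le> C\<close> by (intro mult_left_mono) auto
      then have "C * (s + N') \<le> C * (1 + N' / r0) * s"
        by (simp add: algebra_simps)
      then show ?thesis
        using \<open>0 \<le> C\<close> s by (simp add: ennreal_mult[symmetric] ennreal_leI)
    qed
    finally show "emeasure M (cball 0 s) \<le> ennreal (C * (1 + N' / r0) * s)" .
  qed
qed

lemma finite_type_imp_finite_on_discs:
  assumes "sets M = sets borel" "finite_type M"
  shows "finite_on_discs M"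
proof
  obtain K where growth: "\<And>s. 1 \<le> s \<Longrightarrow> emeasure M (cball 0 s) \<le> ennreal (K * s)"
    using finite_type_linear_growth[OF assms, of 1] by auto
  fix s
  have "emeasure M (cball 0 s) \<le> emeasure M (cball 0 (max s 1))"
    using assms(1) by (intro emeasure_mono) auto
  also have "\<dots> \<le> ennreal (K * max s 1)"
    by (rule growth) simp
  finally show "emeasure M (cball 0 s) < \<infinity>"
    by (simp add: le_less_trans)
qed (fact assms(1))

lemma abs_max_diff_le:
  fixes a b c d :: real
  assumes "\<bar>a - c\<bar> \<le> C" "\<bar>b - d\<bar> \<le> C"
  shows "\<bar>max a b - max c d\<bar> \<le> C"
  using assms by (auto simp: max_def abs_if)

theorem proposition3:
  fixes M :: "complex measure" and r0 :: real
  assumes borel: "sets M = sets borel"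
    and ft: "finite_type M"
    and r0: "r0 > 0"
  shows "(\<exists>C. \<forall>r R. r0 \<le> r \<and> r < R \<longrightarrow> \<bar>breve_l_rh M r R - l_rh M r R\<bar> \<le> C)
       \<and> (\<exists>C. \<forall>r R. r0 \<le> r \<and> r < R \<longrightarrow> \<bar>breve_l_lh M r R - l_lh M r R\<bar> \<le> C)
       \<and> (\<exists>C. \<forall>r R. r0 \<le> r \<and> r < R \<longrightarrow> \<bar>breve_l_mu M r R - l_mu M r R\<bar> \<le> C)
       \<and> (\<forall>a b. 0 < a \<and> a \<le> 1 \<and> 1 \<le> b \<longrightarrow>
            (\<exists>C. \<forall>r R. r0 \<le> r \<and> r < R \<longrightarrow> \<bar>l_rh M r R - l_rh M (a * r) (b * R)\<bar> \<le> C)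
          \<and> (\<exists>C. \<forall>r R. r0 \<le> r \<and> r < R \<longrightarrow> \<bar>l_lh M r R - l_lh M (a * r) (b * R)\<bar> \<le> C)
          \<and> (\<exists>C. \<forall>r R. r0 \<le> r \<and> r < R \<longrightarrow> \<bar>l_mu M r R - l_mu M (a * r) (b * R)\<bar> \<le> C))"
proof -
  interpret finite_on_discs M
    using finite_type_imp_finite_on_discs[OF borel ft] .
  obtain K where "0 \<le> K" and growth: "\<And>s. r0 \<le> s \<Longrightarrow> emeasure M (cball 0 s) \<le> ennreal (K * s)"
    using finite_type_linear_growth[OF borel ft r0] by blast
  have K: "measure M (cball 0 s) \<le> K * s" if "r0 \<le> s" for s
    unfolding measure_def using growth[OF that] \<open>0 \<le> K\<close> r0 that by (intro enn2real_leI) auto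
  note plus = borel_measurable_cos_plus_Arg cos_plus_nonneg cos_plus_le_1
  note minus = borel_measurable_cos_minus_Arg cos_minus_nonneg cos_minus_le_1
  have rh: "\<bar>breve_l_rh M r R - l_rh M r R\<bar> \<le> K"
    and lh: "\<bar>breve_l_lh M r R - l_lh M r R\<bar> \<le> K" if "r0 \<le> r" "r < R" for r R
    using that r0 by (simp_all add: breve_l_rh_eq breve_l_lh_eq l_rh_eq_annulus_integral l_lh_eq_annulus_integral
        annulus_integral_by_parts_linear_growth[OF plus K r0] annulus_integral_by_parts_linear_growth[OF minus K r0])
  have rh_enlarge: "\<bar>l_rh M r R - l_rh M (a * r) (b * R)\<bar> \<le> K / a + K * b"
    and lh_enlarge: "\<bar>l_lh M r R - l_lh M (a * r) (b * R)\<bar> \<le> K / a + K * b"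
    if "r0 \<le> r" "r < R" "0 < a" "a \<le> 1" "1 \<le> b" for r R a b
    using that r0 by (simp_all add: l_rh_eq_annulus_integral l_lh_eq_annulus_integral
        annulus_integral_enlarge_linear_growth[OF plus K r0] annulus_integral_enlarge_linear_growth[OF minus K r0])
  show ?thesis
    unfolding breve_l_mu_def l_mu_def
    by (intro conjI allI impI exI) (auto intro: rh lh rh_enlarge lh_enlarge abs_max_diff_le)
qed

end
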